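(* Let $\nu$ be a class (ii) distribution with associated functions $f,\varphi,\Phi$ and assume one of the following: (i) $\Phi^{-1}$ is pseudo-regularly varying; (ii) $\nu$ is a Weibull distribution with shape $k\in(0,1)$ and scale $\lambda>0$ (with $\Phi(x)=(x/\lambda)^k$); (iii) $\nu$ is a generalized lognormal distribution with $r>1$ (with $\Phi(x)=\frac{1}{r\sigma^r}\log(x)^r$). Let $\theta>1$ and let $\eta$ be a distribution with density $g$ such that $\liminf_{x\to\infty}x^{t+1}g(x)>0$ for some $t\in(1,\theta)$. Then $D_{F_\Phi}(\eta|\nu)=\infty$.
   Context: Densities are written $f=e^{-\varphi}$. For strictly convex $F$ with $F(1)=0$, $D_F(\eta|\nu)=\int_0^\infty F(g/f)f\,dx$ if $\eta\ll\nu$ and $+\infty$ otherwise. Class (ii): $\lim_{x\to\infty}\varphi(x)/x=0$, $\lim_{x\to\infty}\varphi(x)/\log x=\infty$, and there exist $\bar x>0$ and $\Phi:\mathbb R_+\to\mathbb R$ positive, strictly concave, twice differentiable and increasing on $[\bar x,\infty)$ such that, with $\Phi^{-1}$ the inverse of $\Phi|_{[\bar x,\infty)}$, $0<\liminf_{x\to\infty}\Phi^{-1}(\varphi(x))/x\le\limsup_{x\to\infty}\Phi^{-1}(\varphi(x))/x<\infty$. With $\bar y=\exp(\Phi(\bar x))$: $F_\Phi(y)=y\log y$ for $y\le\bar y$ and $F_\Phi(y)=a\,y\,\Phi^{-1}(\log y)^\theta+b$ for $y>\bar y$, where $a=\frac{1+\log\bar y}{\Phi^{-1}(\log\bar y)^\theta+\theta\Phi^{-1}(\log\bar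 y)^{\theta-1}(\Phi^{-1})'(\log\bar y)}$, $b=\bar y\log\bar y-a\bar y\Phi^{-1}(\log\bar y)^\theta$. A measurable $h:\mathbb R_+\to(0,\infty)$ is pseudo-regularly varying if $\limsup_{c\to1}\limsup_{x\to\infty}h(cx)/h(x)=1$. The Weibull density with scale $\lambda>0$, shape $k\in(0,1)$ is $f(x)=\frac{k}{\lambda}(x/\lambda)^{k-1}e^{-(x/\lambda)^k}$ for $x\ge0$. The generalized lognormal density is $f(x)=\frac{1}{Zx}\exp\!\big(-\frac{1}{r\sigma^r}|\log x-\mu|^r\big)$, $x>0$, with $Z=2r^{1/r}\sigma\Gamma(1+1/r)$, $r>1$, $\sigma>0$, $\mu\in\mathbb R$. *)

theory Defs
  imports "HOL-Analysis.Analysis"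
begin

definition strictly_concave_on :: "real set \<Rightarrow> (real \<Rightarrow> real) \<Rightarrow> bool" where
  "strictly_concave_on S \<Phi> \<longleftrightarrow>
     (\<forall>x\<in>S. \<forall>y\<in>S. x \<noteq> y \<longrightarrow> (\<forall>t. 0 < t \<and> t < 1 \<longrightarrow>
        \<Phi> (t * x + (1 - t) * y) > t * \<Phi> x + (1 - t) * \<Phi> y))"

definition Phi_inv :: "(real \<Rightarrow> real) \<Rightarrow> real \<Rightarrow> real \<Rightarrow> real" where
  "Phi_inv \<Phi> xbar y = (THE x. xbar \<le> x \<and> \<Phi> x = y)"

text \<open>The function F_Phi (depending on Phi, xbar and theta).
  The derivative of the inverse at log ybar = Phi xbar is 1 / Phi'(xbar).\<close>
definition F_Phi :: "(real \<Rightarrow> real) \<Rightarrow> real \<Rightarrow> real \<Rightarrow> real \<Rightarrow> real" where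
  "F_Phi \<Phi> xbar \<theta> y =
     (let ybar = exp (\<Phi> xbar);
          Pinv = Phi_inv \<Phi> xbar;
          dPinv = 1 / deriv \<Phi> (Pinv (ln ybar));
          a = (1 + ln ybar) /
              (Pinv (ln ybar) powr \<theta> + \<theta> * Pinv (ln ybar) powr (\<theta> - 1) * dPinv);
          b = ybar * ln ybar - a * ybar * Pinv (ln ybar) powr \<theta>
      in if y \<le> ybar then y * ln y else a * y * Pinv (ln y) powr \<theta> + b)"

text \<open>F-divergence D_F(eta|nu) of the law with density g w.r.t. the law with
  (everywhere positive) density f on [0,infinity): the integral of F(g/f) f,
  as an extended real (positive part minus negative part).\<close>
definition F_div :: "(real \<Rightarrow> real) \<Rightarrow> (real \<Rightarrow> real) \<Rightarrow> (real \<Rightarrow> real) \<Rightarrow> ereal" where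
  "F_div F g f =
     enn2ereal (\<integral>\<^sup>+ x \<in> {0..}. ennreal (F (g x / f x) * f x) \<partial>lborel)
     - enn2ereal (\<integral>\<^sup>+ x \<in> {0..}. ennreal (- (F (g x / f x) * f x)) \<partial>lborel)"

definition pseudo_regularly_varying :: "(real \<Rightarrow> real) \<Rightarrow> bool" where
  "pseudo_regularly_varying h \<longleftrightarrow>
     Limsup (at 1) (\<lambda>c. Limsup at_top (\<lambda>x. ereal (h (c * x) / h x))) = 1"

end

theory Submission
  imports Defs "HOL-Real_Asymp.Real_Asymp"
begin

text \<open>
  The negative part of the divergence is harmless, since F_Phi \<ge> -1 on [0, \<infinity>) and \<nu> is a
  probability measure. For the positive part put s = t / \<theta> < 1 and pick c > 0 with
  g(x) > c x^-(t+1) for large x; then the likelihood ratio y = g/f satisfies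
  log y \<ge> \<phi>(x) - (t+1) log x + log c. Each of the three hypotheses gives
  x^s \<le> \<Phi>\<inverse>(\<phi>(x) - (t+1) log x + log c) for large x: in the Weibull and lognormal cases by
  comparing \<Phi>(x^s) with \<Phi>(\<kappa> x) \<le> \<phi>(x) explicitly, and under pseudo-regular variation because
  \<Phi>\<inverse>(\<phi>(x)) \<ge> \<kappa> x while \<Phi>\<inverse> grows by at most a factor 2 when its argument is multiplied by
  a suitable C > 1. Hence F_Phi(y) f \<ge> a g x^(s \<theta>) - |b| f \<ge> a c / x - |b| / x^2, which is not
  integrable at infinity.
\<close>

lemma nn_integral_const_div_ray_eq_infinity:
  fixes K X :: real
  assumes K: "0 < K" and X: "0 < X"
  shows "(\<integral>\<^sup>+x. ennreal (K / x) * indicator {X..} x \<partial>lborel) = \<infinity>"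
proof (rule ccontr)
  define I where "I = (\<integral>\<^sup>+x. ennreal (K / x) * indicator {X..} x \<partial>lborel)"
  assume "\<not> ?thesis"
  then obtain r where r: "I = ennreal r" "0 \<le> r"
    unfolding I_def[symmetric] by (cases I) auto
  have I_ge: "ennreal (K * ln B - K * ln X) \<le> I" if B: "X \<le> B" for B
  proof -
    have ln_integral: "((\<lambda>x. K / x) has_integral (K * ln B - K * ln X)) {X..B}"
    proof (rule fundamental_theorem_of_calculus[OF B])
      fix x assume "x \<in> {X..B}"
      then have "((\<lambda>x. K * ln x) has_real_derivative K * (1 / x)) (at x)"
        using X by (auto intro!: derivative_eq_intros)
      then show "((\<lambda>x. K * ln x) has_vector_derivative K / x) (at x within {X..B})"
        by (simp add: has_real_derivative_iff_has_vector_derivative has_vector_derivative_at_within)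
    qed
    have "(\<integral>\<^sup>+x. ennreal (K / x) * indicator {X..B} x \<partial>lborel) = ennreal (K * ln B - K * ln X)"
      using nn_integral_has_integral_lebesgue'[OF _ ln_integral] K X by auto
    moreover have "(\<integral>\<^sup>+x. ennreal (K / x) * indicator {X..B} x \<partial>lborel) \<le> I"
      unfolding I_def by (rule nn_integral_mono) (auto simp: indicator_def)
    ultimately show ?thesis by simp
  qed
  define B where "B = exp ((r + 1) / K + ln X)"
  have "ln X \<le> (r + 1) / K + ln X"
    using r K by simp
  then have "X \<le> B"
    unfolding B_def by (metis X exp_le_cancel_iff exp_ln)
  moreover have "K * ln B - K * ln X = r + 1"
    using K by (simp add: B_def field_simps)
  ultimately have "ennreal (r + 1) \<le> ennreal r"
    using I_ge r by metis
  then show False using r by (simp add: ennreal_le_iff)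
qed

lemma nn_integral_ray_eq_infinity_if_eventually_ge_inverse:
  fixes h :: "real \<Rightarrow> real" and K :: real
  assumes K: "0 < K" and h: "eventually (\<lambda>x. K / x \<le> h x) at_top"
  shows "(\<integral>\<^sup>+ x \<in> {0..}. ennreal (h x) \<partial>lborel) = \<infinity>"
proof -
  obtain X where X: "1 \<le> X" "\<And>x. X \<le> x \<Longrightarrow> K / x \<le> h x"
    using h eventually_ge_at_top[of 1] unfolding eventually_at_top_linorder
    by (metis (no_types, opaque_lifting) max.boundedE max.cobounded1)
  have "\<infinity> = (\<integral>\<^sup>+x. ennreal (K / x) * indicator {X..} x \<partial>lborel)"
    using nn_integral_const_div_ray_eq_infinity[OF K, of X] X by simp
  also have "\<dots> \<le> (\<integral>\<^sup>+ x \<in> {0..}. ennreal (h x) \<partial>lborel)"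
    using X by (intro nn_integral_mono) (auto simp: indicator_def intro: ennreal_leI)
  finally show ?thesis by (simp add: top_unique)
qed

lemma nn_integral_negative_part_finite:
  fixes F f g :: "real \<Rightarrow> real"
  assumes F: "\<And>y. 0 \<le> y \<Longrightarrow> - 1 \<le> F y"
    and f: "\<And>x. 0 \<le> x \<Longrightarrow> 0 < f x" and g: "\<And>x. 0 \<le> x \<Longrightarrow> 0 \<le> g x"
    and f_finite: "(\<integral>\<^sup>+ x \<in> {0..}. ennreal (f x) \<partial>lborel) \<noteq> \<infinity>"
  shows "(\<integral>\<^sup>+ x \<in> {0..}. ennreal (- (F (g x / f x) * f x)) \<partial>lborel) \<noteq> \<infinity>"
proof -
  have "- (F (g x / f x) * f x) \<le> f x" if x: "0 \<le> x" for x
  proof -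
    have "- F (g x / f x) \<le> 1"
      using F f[OF x] g[OF x] by (simp add: minus_le_iff)
    then show ?thesis
      using mult_right_mono[of "- F (g x / f x)" 1 "f x"] f[OF x] by simp
  qed
  then have "(\<integral>\<^sup>+ x \<in> {0..}. ennreal (- (F (g x / f x) * f x)) \<partial>lborel)
      \<le> (\<integral>\<^sup>+ x \<in> {0..}. ennreal (f x) \<partial>lborel)"
    by (intro nn_integral_mono) (auto simp: indicator_def intro: ennreal_leI)
  with f_finite show ?thesis
    by (auto simp: top_unique)
qed

lemma F_div_eq_infinity:
  assumes "(\<integral>\<^sup>+ x \<in> {0..}. ennreal (F (g x / f x) * f x) \<partial>lborel) = \<infinity>"
    and "(\<integral>\<^sup>+ x \<in> {0..}. ennreal (- (F (g x / f x) * f x)) \<partial>lborel) \<noteq> \<infinity>"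
  shows "F_div F g f = \<infinity>"
  using assms unfolding F_div_def by (cases "(\<integral>\<^sup>+ x \<in> {0..}. ennreal (- (F (g x / f x) * f x)) \<partial>lborel)") auto

lemma eventually_gt_if_Liminf_pos:
  assumes "0 < Liminf F (\<lambda>x. ereal (h x))"
  obtains c where "0 < c" "eventually (\<lambda>x. c < h x) F"
proof -
  obtain c where "0 < ereal c" "ereal c < Liminf F (\<lambda>x. ereal (h x))"
    using ereal_dense2[OF assms] by blast
  then show thesis
    using that less_LiminfD by fastforce
qed

lemma eventually_linear_lt_if_Liminf_pos:
  fixes h :: "real \<Rightarrow> real"
  assumes "0 < Liminf at_top (\<lambda>x. ereal (h x / x))"
  obtains \<kappa> where "0 < \<kappa>" "eventually (\<lambda>x. \<kappa> * x < h x) at_top"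
proof -
  obtain \<kappa> where \<kappa>: "0 < \<kappa>" "eventually (\<lambda>x. \<kappa> < h x / x) at_top"
    using eventually_gt_if_Liminf_pos[OF assms] .
  have "eventually (\<lambda>x. \<kappa> * x < h x) at_top"
    using \<kappa>(2) eventually_gt_at_top[of 0] by eventually_elim (simp add: field_simps)
  with \<kappa>(1) show thesis by (rule that)
qed

lemma eventually_mult_ln_le_if_ratio_at_top:
  fixes \<phi> :: "real \<Rightarrow> real"
  assumes "filterlim (\<lambda>x. \<phi> x / ln x) at_top at_top"
  shows "eventually (\<lambda>x. B * ln x \<le> \<phi> x) at_top"
  using assms[unfolded filterlim_at_top, rule_format, of B] eventually_gt_at_top[of 1]
  by eventually_elim (simp add: pos_le_divide_eq)

lemma shift_at_top_if_ratio_at_top: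
  fixes \<phi> :: "real \<Rightarrow> real"
  assumes "filterlim (\<lambda>x. \<phi> x / ln x) at_top at_top"
  shows "filterlim (\<lambda>x. \<phi> x - L * ln x + l) at_top at_top"
proof (rule filterlim_at_top_mono)
  show "filterlim (\<lambda>x. l + ln x) at_top at_top"
    by (rule filterlim_tendsto_add_at_top[OF tendsto_const ln_at_top])
  show "eventually (\<lambda>x. l + ln x \<le> \<phi> x - L * ln x + l) at_top"
    using eventually_mult_ln_le_if_ratio_at_top[OF assms, of "L + 1"]
    by eventually_elim (simp add: algebra_simps)
qed

lemma deriv_nonneg_if_strict_mono_on_ray:
  fixes \<Phi> :: "real \<Rightarrow> real"
  assumes mono: "strict_mono_on {xbar..} \<Phi>" and diff: "\<Phi> differentiable at xbar"
  shows "0 \<le> deriv \<Phi> xbar"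
proof (rule ccontr)
  assume "\<not> ?thesis"
  moreover have "(\<Phi> has_real_derivative deriv \<Phi> xbar) (at xbar)"
    using diff by (simp add: DERIV_deriv_iff_real_differentiable)
  ultimately obtain d where "0 < d" "\<And>h. 0 < h \<Longrightarrow> h < d \<Longrightarrow> \<Phi> (xbar + h) < \<Phi> xbar"
    using has_real_derivative_neg_dec_right by (metis UNIV_I not_le)
  moreover have "\<Phi> xbar < \<Phi> (xbar + d / 2)"
    using strict_mono_onD[OF mono, of xbar "xbar + d / 2"] \<open>0 < d\<close> by auto
  ultimately show False
    by (smt (verit, best) field_sum_of_halves)
qed

lemma Phi_unbounded_if_Liminf_pos:
  fixes \<phi> \<Phi> :: "real \<Rightarrow> real"
  assumes \<phi>: "filterlim \<phi> at_top at_top"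
    and pos: "0 < Liminf at_top (\<lambda>x. ereal (Phi_inv \<Phi> xbar (\<phi> x) / x))"
  shows "\<exists>x\<ge>xbar. M < \<Phi> x"
proof (rule ccontr)
  assume "\<not> ?thesis"
  then have M: "\<And>x. xbar \<le> x \<Longrightarrow> \<Phi> x \<le> M" by (simp add: not_less)
  define C where "C = Phi_inv \<Phi> xbar (M + 1)"
  \<comment> \<open>above M the inverse is a definite description of an empty predicate, hence constant\<close>
  have "eventually (\<lambda>x. ereal (C / x) = ereal (Phi_inv \<Phi> xbar (\<phi> x) / x)) at_top"
    using \<phi>[unfolded filterlim_at_top, rule_format, of "M + 1"]
  proof eventually_elim
    case (elim x)
    have "(\<lambda>z. xbar \<le> z \<and> \<Phi> z = \<phi> x) = (\<lambda>z. xbar \<le> z \<and> \<Phi> z = M + 1)"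
      using M elim by fastforce
    then show ?case unfolding C_def Phi_inv_def by simp
  qed
  moreover have "((\<lambda>x. ereal (C / x)) \<longlongrightarrow> ereal 0) at_top"
    by (intro tendsto_intros tendsto_divide_0[OF tendsto_const]
        filterlim_at_top_imp_at_infinity filterlim_ident)
  ultimately have "((\<lambda>x. ereal (Phi_inv \<Phi> xbar (\<phi> x) / x)) \<longlongrightarrow> ereal 0) at_top"
    by (rule Lim_transform_eventually[rotated])
  then show False
    using pos lim_imp_Liminf[of at_top] by force
qed

lemma ln_likelihood_ratio_ge:
  fixes c x t gx ph :: real
  assumes "0 < c" "0 < x" "c < x powr (t + 1) * gx"
  shows "0 < gx" and "ph - (t + 1) * ln x + ln c \<le> ln (gx / exp (- ph))"
proof -
  have low: "c / x powr (t + 1) < gx"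
    using assms by (simp add: field_simps)
  moreover have "0 < c / x powr (t + 1)"
    using assms by simp
  ultimately show "0 < gx" by linarith
  have "ln c - (t + 1) * ln x = ln (c / x powr (t + 1))"
    using assms by (simp add: ln_div ln_powr)
  also have "\<dots> \<le> ln gx"
    using low \<open>0 < c / x powr (t + 1)\<close> by simp
  finally show "ph - (t + 1) * ln x + ln c \<le> ln (gx / exp (- ph))"
    using \<open>0 < gx\<close> by (simp add: ln_div)
qed

lemma pseudo_regularly_varying_obtain_ratio_bound:
  fixes h :: "real \<Rightarrow> real"
  assumes "pseudo_regularly_varying h"
  obtains C where "1 < C" "eventually (\<lambda>w. h (C * w) / h w < 2) at_top"
proof -
  let ?H = "\<lambda>C. Limsup at_top (\<lambda>w. ereal (h (C * w) / h w))"
  have "Limsup (at 1) ?H < ereal 2"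
    using assms unfolding pseudo_regularly_varying_def by simp
  then have "eventually (\<lambda>C. ?H C < ereal 2) (at_right 1)"
    by (auto dest: Limsup_lessD simp: eventually_at_split)
  then obtain C where C: "?H C < ereal 2" "1 < C"
    using eventually_conj[OF _ eventually_at_right_less[of "1::real"]] eventually_happens[of _ "at_right (1::real)"]
    by force
  have "eventually (\<lambda>w. ereal (h (C * w) / h w) < ereal 2) at_top"
    using Limsup_lessD[OF C(1)] .
  then show thesis
    using that C(2) by simp
qed

lemma Weibull_Phi_shift_bound:
  fixes \<Phi> :: "real \<Rightarrow> real" and k scale s \<kappa> L l :: real
  assumes \<Phi>: "\<forall>x\<ge>0. \<Phi> x = (x / scale) powr k" and k: "0 < k" "k < 1" and scale: "0 < scale"
    and s: "0 < s" "s < 1" and \<kappa>: "0 < \<kappa>"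
  shows "eventually (\<lambda>x. \<Phi> (x powr s) \<le> \<Phi> (\<kappa> * x) - L * ln x + l) at_top"
proof -
  have "eventually (\<lambda>x. (x powr s / scale) powr k \<le> (\<kappa> * x / scale) powr k - L * ln x + l) at_top"
    using k scale s \<kappa> by real_asymp
  then show ?thesis
    using eventually_gt_at_top[of 0] by eventually_elim (use \<Phi> \<kappa> in simp)
qed

lemma lognormal_Phi_shift_bound:
  fixes \<Phi> :: "real \<Rightarrow> real" and r \<sigma> s \<kappa> L l :: real
  assumes \<Phi>: "\<forall>x\<ge>1. \<Phi> x = 1 / (r * \<sigma> powr r) * ln x powr r" and r: "1 < r" and \<sigma>: "0 < \<sigma>"
    and s: "0 < s" "s < 1" and \<kappa>: "0 < \<kappa>"
  shows "eventually (\<lambda>x. \<Phi> (x powr s) \<le> \<Phi> (\<kappa> * x) - L * ln x + l) at_top"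
proof -
  define A where "A = r * \<sigma> powr r"
  have A: "0 < A" unfolding A_def using r \<sigma> by simp
  define q where "q = s powr r"
  have q: "0 < q" "q < 1"
    unfolding q_def using s r powr_less_mono2[of r s 1] by auto
  have "eventually (\<lambda>u. 0 \<le> (u + ln \<kappa>) powr r - q * u powr r - A * L * u + A * l) at_top"
    using r q by real_asymp
  from eventually_compose_filterlim[OF this ln_at_top]
  show ?thesis
    using eventually_ge_at_top[of 1] eventually_ge_at_top[of "1 / \<kappa>"]
  proof eventually_elim
    case (elim x)
    have "1 \<le> x powr s" "1 \<le> \<kappa> * x"
      using elim s \<kappa> by (auto simp: ge_one_powr_ge_zero field_simps)
    then have "A * \<Phi> (x powr s) = q * ln x powr r" "A * \<Phi> (\<kappa> * x) = (ln x + ln \<kappa>) powr r"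
      using \<Phi> elim(2) \<kappa> r \<sigma> by (simp_all add: A_def q_def ln_powr ln_mult powr_mult add.commute)
    then have "A * (\<Phi> (x powr s) + L * ln x) \<le> A * (\<Phi> (\<kappa> * x) + l)"
      using elim(1) by (simp add: algebra_simps)
    then show ?case
      using A by simp
  qed
qed

text \<open>The constants a and b of F_Phi, with \<Phi>\<inverse>(log ybar) = xbar substituted.\<close>

definition F_Phi_a :: "(real \<Rightarrow> real) \<Rightarrow> real \<Rightarrow> real \<Rightarrow> real" where
  "F_Phi_a \<Phi> xbar \<theta> =
     (1 + \<Phi> xbar) / (xbar powr \<theta> + \<theta> * xbar powr (\<theta> - 1) * (1 / deriv \<Phi> xbar))"

definition F_Phi_b :: "(real \<Rightarrow> real) \<Rightarrow> real \<Rightarrow> real \<Rightarrow> real" where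
  "F_Phi_b \<Phi> xbar \<theta> = exp (\<Phi> xbar) * \<Phi> xbar - F_Phi_a \<Phi> xbar \<theta> * exp (\<Phi> xbar) * xbar powr \<theta>"

lemma F_Phi_a_pos:
  assumes "0 < xbar" "0 \<le> \<Phi> xbar" "0 \<le> \<theta>" "0 \<le> deriv \<Phi> xbar"
  shows "0 < F_Phi_a \<Phi> xbar \<theta>"
proof -
  have "0 \<le> \<theta> * xbar powr (\<theta> - 1) * (1 / deriv \<Phi> xbar)"
    using assms by simp
  moreover have "0 < xbar powr \<theta>"
    using assms by simp
  ultimately have "0 < xbar powr \<theta> + \<theta> * xbar powr (\<theta> - 1) * (1 / deriv \<Phi> xbar)"
    by linarith
  then show ?thesis
    unfolding F_Phi_a_def using assms by (intro divide_pos_pos) auto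
qed

locale unbounded_strict_mono_on_ray =
  fixes \<Phi> :: "real \<Rightarrow> real" and xbar :: real
  assumes strict_mono: "strict_mono_on {xbar..} \<Phi>"
    and continuous: "continuous_on {xbar..} \<Phi>"
    and unbounded: "\<And>M. \<exists>x\<ge>xbar. M < \<Phi> x"
begin

lemma Phi_inv_Phi:
  assumes "xbar \<le> x"
  shows "Phi_inv \<Phi> xbar (\<Phi> x) = x"
  unfolding Phi_inv_def
  using assms strict_mono_on_eqD[OF strict_mono] by (intro the_equality) auto

lemma Phi_inv_ge_and_Phi_Phi_inv:
  assumes "\<Phi> xbar \<le> v"
  shows "xbar \<le> Phi_inv \<Phi> xbar v \<and> \<Phi> (Phi_inv \<Phi> xbar v) = v"
proof -
  obtain x1 where x1: "xbar \<le> x1" "v < \<Phi> x1"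
    using unbounded by blast
  have "continuous_on {xbar..x1} \<Phi>"
    using continuous by (rule continuous_on_subset) auto
  then obtain x where "xbar \<le> x" "\<Phi> x = v"
    using IVT'[of \<Phi> xbar v x1] assms x1 by auto
  then show ?thesis
    using Phi_inv_Phi by auto
qed

lemma Phi_inv_mono:
  assumes "\<Phi> xbar \<le> v" and "v \<le> w"
  shows "Phi_inv \<Phi> xbar v \<le> Phi_inv \<Phi> xbar w"
  using Phi_inv_ge_and_Phi_Phi_inv[of v] Phi_inv_ge_and_Phi_Phi_inv[of w] assms
    strict_mono_onD[OF strict_mono, of "Phi_inv \<Phi> xbar w" "Phi_inv \<Phi> xbar v"]
  by (metis atLeast_iff linorder_not_le order_trans order_less_irrefl)

lemma F_Phi_eq:
  "F_Phi \<Phi> xbar \<theta> y =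
     (if y \<le> exp (\<Phi> xbar) then y * ln y
      else F_Phi_a \<Phi> xbar \<theta> * y * Phi_inv \<Phi> xbar (ln y) powr \<theta> + F_Phi_b \<Phi> xbar \<theta>)"
  unfolding F_Phi_def F_Phi_a_def F_Phi_b_def Let_def
  using Phi_inv_Phi[of xbar] by simp

lemma F_Phi_ge_minus_one:
  assumes "0 \<le> xbar" "0 \<le> \<Phi> xbar" "0 \<le> \<theta>" "0 \<le> F_Phi_a \<Phi> xbar \<theta>" and y: "0 \<le> y"
  shows "- 1 \<le> F_Phi \<Phi> xbar \<theta> y"
proof (cases "y \<le> exp (\<Phi> xbar)")
  case True
  have "- 1 \<le> y * ln y"
  proof (cases "y = 0")
    case False
    then have "0 < y" using y by simp
    then have "- ln y \<le> 1 / y - 1"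
      using ln_le_minus_one[of "1 / y"] by (simp add: ln_div)
    then have "- (y * ln y) \<le> 1 - y"
      using mult_left_mono[of "- ln y" "1 / y - 1" y] \<open>0 < y\<close> by (simp add: right_diff_distrib)
    then show ?thesis using y by linarith
  qed simp
  then show ?thesis using True by (simp add: F_Phi_eq)
next
  case False
  have "\<Phi> xbar < ln y"
    using False by (metis exp_gt_zero exp_le_cancel_iff exp_ln less_trans linorder_not_le)
  then have "xbar powr \<theta> \<le> Phi_inv \<Phi> xbar (ln y) powr \<theta>"
    using Phi_inv_ge_and_Phi_Phi_inv[of "ln y"] assms by (intro powr_mono2) auto
  then have "F_Phi_a \<Phi> xbar \<theta> * exp (\<Phi> xbar) * xbar powr \<theta>
      \<le> F_Phi_a \<Phi> xbar \<theta> * y * Phi_inv \<Phi> xbar (ln y) powr \<theta>"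
    using False assms by (intro mult_mono) (auto intro: mult_left_mono)
  moreover have "0 \<le> exp (\<Phi> xbar) * \<Phi> xbar"
    using assms by simp
  ultimately show ?thesis
    using False by (simp add: F_Phi_eq F_Phi_b_def)
qed

lemma F_Phi_times_density_ge_inverse:
  fixes \<theta> x c s t gx ph :: real
  defines "a \<equiv> F_Phi_a \<Phi> xbar \<theta>" and "b \<equiv> F_Phi_b \<Phi> xbar \<theta>"
    and "v \<equiv> ph - (t + 1) * ln x + ln c"
  assumes \<theta>: "0 < \<theta>" and a: "0 < a" and x: "1 \<le> x" and c: "0 < c"
    and s: "0 \<le> s" "s * \<theta> = t"
    and gx: "c < x powr (t + 1) * gx" and ph: "2 * ln x \<le> ph"
    and v: "\<Phi> xbar < v" and Pv: "x powr s \<le> Phi_inv \<Phi> xbar v"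
    and b: "2 * \<bar>b\<bar> \<le> a * c * x"
  shows "a * c / 2 / x \<le> F_Phi \<Phi> xbar \<theta> (gx / exp (- ph)) * exp (- ph)"
proof -
  define y where "y = gx / exp (- ph)"
  define Q where "Q = Phi_inv \<Phi> xbar (ln y) powr \<theta>"
  have x0: "0 < x" using x by simp
  have g0: "0 < gx" and vy: "v \<le> ln y"
    using ln_likelihood_ratio_ge[OF c x0 gx] unfolding y_def v_def by auto
  then have "exp (\<Phi> xbar) < y"
    using v y_def by (metis exp_less_mono exp_ln divide_pos_pos exp_gt_zero order_less_le_trans)
  then have Fy: "F_Phi \<Phi> xbar \<theta> y * exp (- ph) = a * gx * Q + b * exp (- ph)"
    unfolding F_Phi_eq a_def b_def Q_def y_def by (simp add: algebra_simps)
  have "x powr t = (x powr s) powr \<theta>"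
    using s by (simp add: powr_powr)
  also have "\<dots> \<le> Q"
    unfolding Q_def using Pv Phi_inv_mono[OF less_imp_le[OF v] vy] \<theta>
    by (intro powr_mono2) auto
  finally have xt_Q: "x powr t \<le> Q" .
  have "c / x = c / x powr (t + 1) * x powr t"
    using x0 by (simp add: powr_add field_simps)
  also have "\<dots> \<le> gx * x powr t"
    using gx x0 by (intro mult_right_mono) (auto simp: field_simps)
  also have "\<dots> \<le> gx * Q"
    using xt_Q g0 by (intro mult_left_mono) auto
  finally have main: "a * c / x \<le> a * gx * Q"
    using a mult_left_mono[of "c / x" "gx * Q" a] by (simp add: mult.assoc)
  have "exp (- ph) \<le> exp (- ln (x\<^sup>2))"
    using ph x0 by (simp add: ln_realpow)
  then have "\<bar>b\<bar> * exp (- ph) \<le> \<bar>b\<bar> / x\<^sup>2"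
    using x0 by (simp add: exp_minus mult_left_mono divide_inverse)
  also have "\<dots> \<le> a * c / 2 / x"
    using mult_right_mono[OF b, of x] x0 by (simp add: field_simps power2_eq_square)
  finally have "\<bar>b\<bar> * exp (- ph) \<le> a * c / 2 / x" .
  then show ?thesis
    using Fy main abs_ge_minus_self[of b] mult_right_mono[of "- b" "\<bar>b\<bar>" "exp (- ph)"]
    unfolding y_def by auto
qed

lemma eventually_F_Phi_times_density_ge_inverse:
  fixes \<phi> g :: "real \<Rightarrow> real" and \<theta> c s t :: real
  assumes \<theta>: "0 < \<theta>" and a: "0 < F_Phi_a \<Phi> xbar \<theta>" and c: "0 < c"
    and s: "0 \<le> s" "s * \<theta> = t"
    and \<phi>: "filterlim (\<lambda>x. \<phi> x / ln x) at_top at_top"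
    and g: "eventually (\<lambda>x. c < x powr (t + 1) * g x) at_top"
    and Pv: "eventually (\<lambda>x. x powr s \<le> Phi_inv \<Phi> xbar (\<phi> x - (t + 1) * ln x + ln c)) at_top"
  shows "eventually (\<lambda>x. F_Phi_a \<Phi> xbar \<theta> * c / 2 / x
                         \<le> F_Phi \<Phi> xbar \<theta> (g x / exp (- \<phi> x)) * exp (- \<phi> x)) at_top"
  using g Pv eventually_mult_ln_le_if_ratio_at_top[OF \<phi>, of 2]
    shift_at_top_if_ratio_at_top[OF \<phi>, of "t + 1" "ln c", unfolded filterlim_at_top_dense,
      rule_format, of "\<Phi> xbar"]
    eventually_ge_at_top[of 1]
    eventually_ge_at_top[of "2 * \<bar>F_Phi_b \<Phi> xbar \<theta>\<bar> / (F_Phi_a \<Phi> xbar \<theta> * c)"]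
proof eventually_elim
  case (elim x)
  then show ?case
    using \<theta> a c s by (intro F_Phi_times_density_ge_inverse) (auto simp: field_simps)
qed

lemma eventually_powr_le_Phi_inv_shift_if_Phi_bound:
  fixes \<phi> :: "real \<Rightarrow> real" and \<kappa> s L l :: real
  assumes \<kappa>: "0 < \<kappa>" and s: "0 < s"
    and \<phi>: "filterlim \<phi> at_top at_top"
    and lin: "eventually (\<lambda>x. \<kappa> * x < Phi_inv \<Phi> xbar (\<phi> x)) at_top"
    and \<Phi>_bound: "eventually (\<lambda>x. \<Phi> (x powr s) \<le> \<Phi> (\<kappa> * x) - L * ln x + l) at_top"
  shows "eventually (\<lambda>x. x powr s \<le> Phi_inv \<Phi> xbar (\<phi> x - L * ln x + l)) at_top"
proof -
  have "eventually (\<lambda>x. xbar \<le> x powr s) at_top"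
    using s by real_asymp
  moreover have "eventually (\<lambda>x. xbar \<le> \<kappa> * x) at_top"
    using eventually_ge_at_top[of "xbar / \<kappa>"] by eventually_elim (use \<kappa> in \<open>simp add: field_simps\<close>)
  moreover note \<phi>[unfolded filterlim_at_top, rule_format, of "\<Phi> xbar"]
  ultimately show ?thesis
    using lin \<Phi>_bound
  proof eventually_elim
    case (elim x)
    note inv = Phi_inv_ge_and_Phi_Phi_inv[OF elim(3)]
    have "\<Phi> (\<kappa> * x) \<le> \<phi> x"
      using strict_mono_on_leD[OF strict_mono, of "\<kappa> * x"] elim(2,4) inv by fastforce
    then have "\<Phi> (x powr s) \<le> \<phi> x - L * ln x + l"
      using elim(5) by linarith
    moreover have "\<Phi> xbar \<le> \<Phi> (x powr s)"
      using strict_mono_on_leD[OF strict_mono, of xbar "x powr s"] elim(1) by auto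
    ultimately show ?case
      using Phi_inv_mono Phi_inv_Phi[OF elim(1)] by metis
  qed
qed

lemma eventually_powr_le_Phi_inv_shift_if_pseudo_regularly_varying:
  fixes \<phi> :: "real \<Rightarrow> real" and \<kappa> s L l :: real
  assumes xbar: "0 < xbar" and prv: "pseudo_regularly_varying (Phi_inv \<Phi> xbar)"
    and \<kappa>: "0 < \<kappa>" and s: "0 < s" "s < 1"
    and \<phi>: "filterlim (\<lambda>x. \<phi> x / ln x) at_top at_top"
    and lin: "eventually (\<lambda>x. \<kappa> * x < Phi_inv \<Phi> xbar (\<phi> x)) at_top"
  shows "eventually (\<lambda>x. x powr s \<le> Phi_inv \<Phi> xbar (\<phi> x - L * ln x + l)) at_top"
proof -
  define v where "v x = \<phi> x - L * ln x + l" for x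
  obtain C where C: "1 < C" "eventually (\<lambda>w. Phi_inv \<Phi> xbar (C * w) / Phi_inv \<Phi> xbar w < 2) at_top"
    using pseudo_regularly_varying_obtain_ratio_bound[OF prv] .
  have v_top: "filterlim v at_top at_top"
    unfolding v_def by (rule shift_at_top_if_ratio_at_top[OF \<phi>])
  \<comment> \<open>since \<phi> grows faster than ln, \<phi> \<le> C v eventually, so the ratio bound applies at v\<close>
  have "eventually (\<lambda>x. \<phi> x \<le> C * v x) at_top"
    using eventually_mult_ln_le_if_ratio_at_top[OF \<phi>, of "(C * L + 1) / (C - 1)"]
      eventually_ge_at_top[of "exp (- C * l)"] eventually_gt_at_top[of 0]
  proof eventually_elim
    case (elim x)
    then have "(C * L + 1) * ln x \<le> (C - 1) * \<phi> x" and "- C * l \<le> ln x"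
      using C(1) mult_left_mono[OF elim(1), of "C - 1"] ln_ge_iff[of x] by auto
    then show ?case
      unfolding v_def by (simp add: algebra_simps)
  qed
  moreover note eventually_compose_filterlim[OF C(2) v_top]
    v_top[unfolded filterlim_at_top_dense, rule_format, of "\<Phi> xbar"]
    shift_at_top_if_ratio_at_top[OF \<phi>, of 0 0, simplified, unfolded filterlim_at_top, rule_format, of "\<Phi> xbar"]
  moreover have "eventually (\<lambda>x. x powr s \<le> \<kappa> * x / 2) at_top"
    using s \<kappa> by real_asymp
  ultimately show ?thesis
    using lin unfolding v_def[symmetric]
  proof eventually_elim
    case (elim x)
    have "0 < Phi_inv \<Phi> xbar (v x)"
      using Phi_inv_ge_and_Phi_Phi_inv[of "v x"] elim(3) xbar by auto
    then have "Phi_inv \<Phi> xbar (C * v x) < 2 * Phi_inv \<Phi> xbar (v x)"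
      using elim(2) by (simp add: divide_less_eq)
    moreover have "Phi_inv \<Phi> xbar (\<phi> x) \<le> Phi_inv \<Phi> xbar (C * v x)"
      using Phi_inv_mono elim(1,4) by blast
    ultimately show ?case
      using elim(5,6) by linarith
  qed
qed

end

theorem proposition4p5:
  fixes \<phi> \<Phi> g :: "real \<Rightarrow> real" and xbar \<theta> :: real
  assumes phi_meas: "\<phi> \<in> borel_measurable borel"
    and nu_prob: "(\<integral>\<^sup>+ x \<in> {0..}. ennreal (exp (- \<phi> x)) \<partial>lborel) = 1"
    and lim1: "((\<lambda>x. \<phi> x / x) \<longlongrightarrow> 0) at_top"
    and lim2: "filterlim (\<lambda>x. \<phi> x / ln x) at_top at_top"
    and xbar_pos: "xbar > 0"
    and Phi_pos: "\<forall>x\<ge>xbar. \<Phi> x > 0"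
    and Phi_conc: "strictly_concave_on {xbar..} \<Phi>"
    and Phi_diff: "\<forall>x\<ge>xbar. \<Phi> differentiable at x"
    and Phi_diff2: "\<forall>x\<ge>xbar. deriv \<Phi> differentiable at x"
    and Phi_incr: "strict_mono_on {xbar..} \<Phi>"
    and liminf_pos: "0 < Liminf at_top (\<lambda>x. ereal (Phi_inv \<Phi> xbar (\<phi> x) / x))"
    and limsup_fin: "Limsup at_top (\<lambda>x. ereal (Phi_inv \<Phi> xbar (\<phi> x) / x)) < \<infinity>"
    and cases:
      "pseudo_regularly_varying (Phi_inv \<Phi> xbar)
       \<or> (\<exists>k lam. 0 < k \<and> k < 1 \<and> 0 < lam \<and>
            (\<forall>x>0. exp (- \<phi> x) = k / lam * (x / lam) powr (k - 1) * exp (- ((x / lam) powr k))) \<and>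
            (\<forall>x\<ge>0. \<Phi> x = (x / lam) powr k))
       \<or> (\<exists>r \<sigma> \<mu>. 1 < r \<and> 0 < \<sigma> \<and>
            (\<forall>x>0. exp (- \<phi> x) =
               1 / (2 * r powr (1 / r) * \<sigma> * Gamma (1 + 1 / r) * x) *
               exp (- (1 / (r * \<sigma> powr r)) * \<bar>ln x - \<mu>\<bar> powr r)) \<and>
            (\<forall>x\<ge>1. \<Phi> x = 1 / (r * \<sigma> powr r) * ln x powr r))"
    and theta: "\<theta> > 1"
    and g_meas: "g \<in> borel_measurable borel"
    and g_nonneg: "\<forall>x\<ge>0. g x \<ge> 0"
    and eta_prob: "(\<integral>\<^sup>+ x \<in> {0..}. ennreal (g x) \<partial>lborel) = 1"
    and g_tail: "\<exists>t. 1 < t \<and> t < \<theta> \<and> 0 < Liminf at_top (\<lambda>x. ereal (x powr (t + 1) * g x))"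
  shows "F_div (F_Phi \<Phi> xbar \<theta>) g (\<lambda>x. exp (- \<phi> x)) = \<infinity>"
proof -
  have \<phi>_top: "filterlim \<phi> at_top at_top"
    using shift_at_top_if_ratio_at_top[OF lim2, of 0 0] by simp
  have "continuous_on {xbar..} \<Phi>"
    using Phi_diff by (intro continuous_at_imp_continuous_on) (auto intro: differentiable_imp_continuous_within)
  then interpret unbounded_strict_mono_on_ray \<Phi> xbar
    using Phi_incr Phi_unbounded_if_Liminf_pos[OF \<phi>_top liminf_pos] by unfold_locales
  have a: "0 < F_Phi_a \<Phi> xbar \<theta>"
    using xbar_pos Phi_pos theta deriv_nonneg_if_strict_mono_on_ray[OF Phi_incr] Phi_diff
    by (intro F_Phi_a_pos) auto
  obtain t where t: "1 < t" "t < \<theta>" "0 < Liminf at_top (\<lambda>x. ereal (x powr (t + 1) * g x))"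
    using g_tail by blast
  obtain c where c: "0 < c" "eventually (\<lambda>x. c < x powr (t + 1) * g x) at_top"
    using eventually_gt_if_Liminf_pos[OF t(3)] .
  obtain \<kappa> where \<kappa>: "0 < \<kappa>" "eventually (\<lambda>x. \<kappa> * x < Phi_inv \<Phi> xbar (\<phi> x)) at_top"
    using eventually_linear_lt_if_Liminf_pos[OF liminf_pos] .
  define s where "s = t / \<theta>"
  have s: "0 < s" "s < 1" "s * \<theta> = t"
    using t theta by (auto simp: s_def field_simps)
  have "eventually (\<lambda>x. x powr s \<le> Phi_inv \<Phi> xbar (\<phi> x - (t + 1) * ln x + ln c)) at_top"
    using cases
  proof (elim disjE exE conjE)
    assume "pseudo_regularly_varying (Phi_inv \<Phi> xbar)"
    then show ?thesis
      using eventually_powr_le_Phi_inv_shift_if_pseudo_regularly_varying xbar_pos \<kappa> s lim2 by blast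
  next
    fix k lam assume "0 < k" "k < 1" "0 < lam" "\<forall>x\<ge>0. \<Phi> x = (x / lam) powr k"
    then show ?thesis
      using eventually_powr_le_Phi_inv_shift_if_Phi_bound[OF \<kappa>(1) s(1) \<phi>_top \<kappa>(2)]
        Weibull_Phi_shift_bound \<kappa>(1) s by blast
  next
    fix r \<sigma> \<mu> assume "1 < r" "0 < \<sigma>" "\<forall>x\<ge>1. \<Phi> x = 1 / (r * \<sigma> powr r) * ln x powr r"
    then show ?thesis
      using eventually_powr_le_Phi_inv_shift_if_Phi_bound[OF \<kappa>(1) s(1) \<phi>_top \<kappa>(2)]
        lognormal_Phi_shift_bound \<kappa>(1) s by blast
  qed
  then have "eventually (\<lambda>x. F_Phi_a \<Phi> xbar \<theta> * c / 2 / x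
      \<le> F_Phi \<Phi> xbar \<theta> (g x / exp (- \<phi> x)) * exp (- \<phi> x)) at_top"
    using theta s by (intro eventually_F_Phi_times_density_ge_inverse[OF _ a c(1) _ s(3) lim2 c(2)]) auto
  then have "(\<integral>\<^sup>+ x \<in> {0..}. ennreal (F_Phi \<Phi> xbar \<theta> (g x / exp (- \<phi> x)) * exp (- \<phi> x)) \<partial>lborel) = \<infinity>"
    using a c(1) by (intro nn_integral_ray_eq_infinity_if_eventually_ge_inverse[of "F_Phi_a \<Phi> xbar \<theta> * c / 2"]) auto
  moreover have "(\<integral>\<^sup>+ x \<in> {0..}. ennreal (- (F_Phi \<Phi> xbar \<theta> (g x / exp (- \<phi> x)) * exp (- \<phi> x))) \<partial>lborel) \<noteq> \<infinity>"
    using a xbar_pos Phi_pos theta g_nonneg nu_prob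
    by (intro nn_integral_negative_part_finite F_Phi_ge_minus_one) auto
  ultimately show ?thesis
    by (rule F_div_eq_infinity)
qed

end
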